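(* Let $\mathbf{Y}$ be an $N\times N$ random Hermitian positive semidefinite matrix with finite mean $E[\mathbf{Y}]=\mathbf{M}_y$, and let $\mathbf{A},\mathbf{B}$ be constant $N\times N$ Hermitian matrices with $\mathbf{A}\succ\mathbf{0}$, $\mathbf{B}\succ\mathbf{0}$ and $\mathbf{A}-\mathbf{B}\succeq\mathbf{0}$. Then $$E[\log_2\det(\mathbf{Y}\mathbf{A}+\mathbf{I}_N)]-E[\log_2\det(\mathbf{Y}\mathbf{B}+\mathbf{I}_N)]\le\log_2\det(\mathbf{M}_y\mathbf{A}+\mathbf{I}_N)-\log_2\det(\mathbf{M}_y\mathbf{B}+\mathbf{I}_N).$$
   Context: $\succeq$ and $\succ$ denote the Loewner order (positive semidefinite / positive definite). *)

theory Defs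
  imports "HOL-Analysis.Analysis" "HOL-Probability.Probability"
begin

text \<open>Complex N x N matrices are rendered as complex^'n^'n (N = CARD('n)).\<close>

definition hermitian :: "complex^'n^'n \<Rightarrow> bool" where
  "hermitian A \<longleftrightarrow> (\<forall>i j. A $ i $ j = cnj (A $ j $ i))"

definition qform :: "complex^'n^'n \<Rightarrow> complex^'n \<Rightarrow> complex" where
  "qform A x = (\<Sum>i\<in>UNIV. \<Sum>j\<in>UNIV. cnj (x $ i) * A $ i $ j * x $ j)"

definition psd :: "complex^'n^'n \<Rightarrow> bool" where
  "psd A \<longleftrightarrow> hermitian A \<and> (\<forall>x. Im (qform A x) = 0 \<and> 0 \<le> Re (qform A x))"

definition pd :: "complex^'n^'n \<Rightarrow> bool" where
  "pd A \<longleftrightarrow> hermitian A \<and> (\<forall>x. x \<noteq> 0 \<longrightarrow> Im (qform A x) = 0 \<and> 0 < Re (qform A x))"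

text \<open>log2 det(X + I); det(YA+I) is real positive in the situations considered.\<close>
definition log2det_plus_I :: "complex^'n^'n \<Rightarrow> real" where
  "log2det_plus_I X = log 2 (Re (det (X + mat 1)))"

end

theory Submission
  imports Defs
begin

text \<open>Since \<open>Y A + I = (Y + A\<^sup>-\<^sup>1) A\<close>, the claim says \<open>g(E[Y]) \<le> E[g(Y)]\<close> for
  \<open>g(Y) = log det (Y + B\<^sup>-\<^sup>1) - log det (Y + A\<^sup>-\<^sup>1)\<close> (up to an additive constant and the factor
  \<open>1 / ln 2\<close>), so it is Jensen's inequality once \<open>g\<close> is convex on the positive semidefinite cone.
  As \<open>A \<succeq> B\<close> gives \<open>B\<^sup>-\<^sup>1 - A\<^sup>-\<^sup>1 \<succeq> 0\<close>, that difference is a sum of rank-one terms \<open>v v\<^sup>*\<close>, and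
  \<open>g\<close> telescopes into increments \<open>log det (Z + v v\<^sup>*) - log det Z = -ln (1 - v\<^sup>* (Z + v v\<^sup>*)\<^sup>-\<^sup>1 v)\<close>.
  Each is convex in \<open>Z\<close>, because \<open>Z \<mapsto> v\<^sup>* Z\<^sup>-\<^sup>1 v\<close> is convex and \<open>-ln (1 - x)\<close> is convex and
  increasing. The same telescoping gives \<open>0 \<le> log\<^sub>2 det (Y A + I) \<le> tr (A Y) / ln 2\<close>, hence
  integrability.\<close>

definition cinner :: "complex^'n \<Rightarrow> complex^'n \<Rightarrow> complex" where
  "cinner x y = (\<Sum>i\<in>UNIV. cnj (x $ i) * y $ i)"

definition outer :: "complex^'n \<Rightarrow> complex^'n \<Rightarrow> complex^'n^'n" where
  "outer u v = (\<chi> i j. u $ i * cnj (v $ j))"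

definition conj_transpose :: "complex^'n^'m \<Rightarrow> complex^'m^'n" where
  "conj_transpose A = (\<chi> i j. cnj (A $ j $ i))"

lemma mult_cnj_eq_cmod_square: "z * cnj z = (complex_of_real (cmod z))^2"
  by (metis complex_norm_square of_real_power)

lemma cinner_add_left: "cinner (x + y) z = cinner x z + cinner y z"
  unfolding cinner_def by (simp add: distrib_right sum.distrib)

lemma cinner_add_right: "cinner x (y + z) = cinner x y + cinner x z"
  unfolding cinner_def by (simp add: distrib_left sum.distrib)

lemma cinner_diff_left: "cinner (x - y) z = cinner x z - cinner y z"
  unfolding cinner_def by (simp add: left_diff_distrib sum_subtractf)

lemma cinner_diff_right: "cinner x (y - z) = cinner x y - cinner x z"
  unfolding cinner_def by (simp add: right_diff_distrib sum_subtractf)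

lemma cinner_scale_left: "cinner (c *s x) y = cnj c * cinner x y"
  unfolding cinner_def by (simp add: sum_distrib_left algebra_simps)

lemma cinner_scale_right: "cinner x (c *s y) = c * cinner x y"
  unfolding cinner_def by (simp add: sum_distrib_left algebra_simps)

lemma cinner_minus_right: "cinner x (- y) = - cinner x y"
  unfolding cinner_def by (simp add: sum_negf)

lemma cinner_commute: "cinner y x = cnj (cinner x y)"
  unfolding cinner_def by (simp add: mult.commute)

lemma cinner_zero_right [simp]: "cinner x 0 = 0"
  unfolding cinner_def by simp

lemma cinner_self: "cinner x x = of_real (\<Sum>i\<in>UNIV. (cmod (x $ i))^2)"
  unfolding cinner_def by (simp add: mult_cnj_eq_cmod_square mult.commute)

lemma Re_cinner_self_pos: "x \<noteq> 0 \<Longrightarrow> 0 < Re (cinner x x)"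
proof -
  assume "x \<noteq> 0"
  then obtain i where "x $ i \<noteq> 0" by (metis vec_eq_iff zero_index)
  then have "0 < (cmod (x $ i))^2" by simp
  also have "\<dots> \<le> (\<Sum>i\<in>UNIV. (cmod (x $ i))^2)"
    by (rule member_le_sum) auto
  finally show ?thesis by (simp add: cinner_self)
qed

lemma cinner_axis_left: "cinner (axis i 1) z = z $ i"
  unfolding cinner_def axis_def by (simp add: if_distrib if_distribR cong: if_cong)

lemma matrix_vector_mult_axis: "(K *v axis i (1::complex)) $ j = K $ j $ i"
  unfolding matrix_vector_mult_def axis_def by (simp add: if_distrib cong: if_cong)

lemma matrix_vector_mult_scale: "A *v (c *s x) = c *s (A *v (x::'a::comm_semiring_1^'n))"
  unfolding matrix_vector_mult_def by (simp add: vec_eq_iff sum_distrib_left mult.left_commute)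

lemma matrix_vector_mult_minus: "A *v (- x) = - (A *v (x::'a::ring_1^'n))"
  unfolding matrix_vector_mult_def by (simp add: vec_eq_iff sum_negf)

lemma cinner_matrix_vector_mult: "cinner x (A *v y) = cinner (conj_transpose A *v x) y"
proof -
  have "cinner x (A *v y) = (\<Sum>i\<in>UNIV. \<Sum>j\<in>UNIV. cnj (x $ i) * A $ i $ j * y $ j)"
    unfolding cinner_def matrix_vector_mult_def by (simp add: sum_distrib_left mult.assoc)
  also have "\<dots> = (\<Sum>j\<in>UNIV. \<Sum>i\<in>UNIV. cnj (x $ i) * A $ i $ j * y $ j)"
    by (rule sum.swap)
  also have "\<dots> = cinner (conj_transpose A *v x) y"
    unfolding cinner_def matrix_vector_mult_def conj_transpose_def
    by (simp add: sum_distrib_left sum_distrib_right mult.commute mult.left_commute)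
  finally show ?thesis .
qed

lemma matrix_add_rdistrib: "(B + C) ** (A :: 'a::semiring_1^'n^'m) = B ** A + C ** A"
  by (vector matrix_matrix_mult_def sum.distrib[symmetric] distrib_right)

lemma trace_add: "trace (X + Y) = trace X + trace (Y :: 'a::semiring_1^'n^'n)"
  unfolding trace_def by (simp add: sum.distrib)

lemma outer_matrix_vector_mult: "outer u v *v x = cinner v x *s u"
  unfolding outer_def cinner_def matrix_vector_mult_def
  by (simp add: vec_eq_iff sum_distrib_left sum_distrib_right mult.commute mult.left_commute)

lemma matrix_mult_outer: "Z ** outer u v = outer (Z *v u) v"
  unfolding outer_def matrix_matrix_mult_def matrix_vector_mult_def
  by (simp add: vec_eq_iff sum_distrib_right mult.assoc)

lemma outer_minus_left: "outer (- u) v = - outer u v"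
  unfolding outer_def by (simp add: vec_eq_iff)

lemma conj_transpose_matrix_mult: "conj_transpose (A ** B) = conj_transpose B ** conj_transpose A"
  unfolding conj_transpose_def matrix_matrix_mult_def by (simp add: vec_eq_iff cnj_sum mult.commute)

lemma conj_transpose_mat_1 [simp]: "conj_transpose (mat 1) = mat 1"
  unfolding conj_transpose_def mat_def by (simp add: vec_eq_iff)

lemma det_conj_transpose: "det (conj_transpose A) = cnj (det (A::complex^'n^'n))"
proof -
  have "det (\<chi> i j. cnj (A $ i $ j)) = cnj (det A)"
    by (simp add: det_def cnj_sum cnj_prod)
  moreover have "conj_transpose A = transpose (\<chi> i j. cnj (A $ i $ j))"
    unfolding conj_transpose_def transpose_def by simp
  ultimately show ?thesis by (metis det_transpose)
qed

lemma qform_eq_cinner: "qform A x = cinner x (A *v x)"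
  unfolding qform_def cinner_def matrix_vector_mult_def
  by (simp add: sum_distrib_left mult.assoc)

lemma qform_zero_right [simp]: "qform A 0 = 0"
  unfolding qform_def by simp

lemma qform_add: "qform (A + B) x = qform A x + qform B x"
  by (simp add: qform_eq_cinner matrix_vector_mult_add_rdistrib cinner_add_right)

lemma qform_diff: "qform (A - B) x = qform A x - qform B x"
  by (simp add: qform_eq_cinner matrix_vector_mult_diff_rdistrib cinner_diff_right)

lemma qform_scaleR: "qform (c *\<^sub>R A) x = complex_of_real c * qform A x"
  unfolding qform_def vector_scaleR_component
  by (simp add: scaleR_conv_of_real sum_distrib_left mult.assoc mult.left_commute)

lemma qform_mat_1: "qform (mat 1) x = cinner x x"
  by (simp add: qform_eq_cinner)

lemma qform_outer_self: "qform (outer u u) x = of_real ((cmod (cinner u x))^2)"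
  by (simp add: qform_eq_cinner outer_matrix_vector_mult cinner_scale_right
      cinner_commute[of x u] mult_cnj_eq_cmod_square)

lemma qform_axis: "qform K (axis i 1) = K $ i $ i"
  by (simp add: qform_eq_cinner cinner_axis_left matrix_vector_mult_axis)

lemma trace_matrix_mult_outer: "trace (A ** outer v v) = cinner v (A *v v)"
  unfolding matrix_mult_outer unfolding trace_def outer_def cinner_def by (simp add: mult.commute)

subsection \<open>Hermitian and positive (semi)definite matrices\<close>

lemma hermitianD: "hermitian A \<Longrightarrow> A $ i $ j = cnj (A $ j $ i)"
  unfolding hermitian_def by blast

lemma hermitian_iff_conj_transpose: "hermitian A \<longleftrightarrow> conj_transpose A = A"
  unfolding hermitian_def conj_transpose_def vec_eq_iff
  by (metis (no_types, lifting) complex_cnj_cnj vec_lambda_beta)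

lemma cinner_hermitian: "hermitian A \<Longrightarrow> cinner x (A *v y) = cinner (A *v x) y"
  by (simp add: cinner_matrix_vector_mult hermitian_iff_conj_transpose)

lemma Im_qform_hermitian: "hermitian A \<Longrightarrow> Im (qform A x) = 0"
  by (metis cinner_commute cinner_hermitian cnj.simps(2) neg_equal_zero qform_eq_cinner)

lemma hermitian_det_real: "hermitian A \<Longrightarrow> Im (det A) = 0"
proof -
  assume "hermitian A"
  then have "cnj (det A) = det A"
    by (simp add: det_conj_transpose[symmetric] hermitian_iff_conj_transpose)
  then show ?thesis by (metis cnj.sel(2) neg_equal_zero)
qed

lemma hermitian_add: "hermitian A \<Longrightarrow> hermitian B \<Longrightarrow> hermitian (A + B)"
  unfolding hermitian_def vector_add_component by (metis complex_cnj_add)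

lemma hermitian_diff: "hermitian A \<Longrightarrow> hermitian B \<Longrightarrow> hermitian (A - B)"
  unfolding hermitian_def vector_minus_component by (metis complex_cnj_diff)

lemma hermitian_scaleR: "hermitian A \<Longrightarrow> hermitian (c *\<^sub>R A)"
  unfolding hermitian_def vector_scaleR_component by (metis complex_cnj_scaleR)

lemma hermitian_outer_self: "hermitian (outer u u)"
  unfolding hermitian_def outer_def by simp

lemma hermitian_mat_1: "hermitian (mat 1)"
  unfolding hermitian_def mat_def by simp

lemma psd_add: "psd A \<Longrightarrow> psd B \<Longrightarrow> psd (A + B)"
  unfolding psd_def by (simp add: hermitian_add qform_add)

lemma pd_add_psd: "pd A \<Longrightarrow> psd B \<Longrightarrow> pd (A + B)"
  unfolding psd_def pd_def by (simp add: hermitian_add qform_add add_pos_nonneg)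

lemma psd_add_pd: "psd A \<Longrightarrow> pd B \<Longrightarrow> pd (A + B)"
  using pd_add_psd[of B A] by (simp add: add.commute)

lemma psd_outer_self: "psd (outer u u)"
  unfolding psd_def by (simp add: hermitian_outer_self qform_outer_self)

lemma psd_zero: "psd 0"
  unfolding psd_def qform_def hermitian_def by simp

lemma pd_imp_psd: "pd A \<Longrightarrow> psd A"
  unfolding psd_def pd_def by (metis order_le_less qform_zero_right zero_complex.sel)

lemma real_quadratic_nonneg_bound:
  fixes a m c :: real
  assumes nonneg: "\<And>s. 0 \<le> a - 2 * s * m + s^2 * m * c" and "0 \<le> c"
  shows "m \<le> a * c"
proof (cases "c = 0")
  case True
  show ?thesis
  proof (rule ccontr)
    assume "\<not> m \<le> a * c"
    then have "0 < m" using True by simp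
    then have "2 * ((a + 1) / (2 * m)) * m = a + 1" by simp
    then show False using nonneg[of "(a + 1) / (2 * m)"] True by simp
  qed
next
  case False
  with \<open>0 \<le> c\<close> have "0 < c" by simp
  then have "(1 / c)^2 * m * c = m / c" by (simp add: power2_eq_square)
  then have "m / c \<le> a" using nonneg[of "1 / c"] by simp
  then show ?thesis using \<open>0 < c\<close> by (simp add: pos_divide_le_eq)
qed

lemma qform_add_scale:
  assumes "hermitian K"
  shows "qform K (x + t *s y) = qform K x + t * cinner x (K *v y) + cnj t * cnj (cinner x (K *v y))
     + (cnj t * t) * qform K y"
proof -
  have "cinner y (K *v x) = cnj (cinner x (K *v y))"
    using cinner_hermitian[OF assms, of y x] cinner_commute[of "K *v y" x] by simp
  moreover have "qform K (x + t *s y) = cinner x (K *v x) + t * cinner x (K *v y)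
      + cnj t * cinner y (K *v x) + cnj t * (t * cinner y (K *v y))"
    unfolding qform_eq_cinner
    by (simp add: matrix_vector_right_distrib matrix_vector_mult_scale cinner_add_left
        cinner_add_right cinner_scale_left cinner_scale_right algebra_simps)
  ultimately show ?thesis by (simp add: qform_eq_cinner mult.assoc)
qed

lemma psd_cauchy_schwarz:
  assumes "psd K"
  shows "(cmod (cinner x (K *v y)))^2 \<le> Re (qform K x) * Re (qform K y)"
proof -
  define b where "b = cinner x (K *v y)"
  have "0 \<le> Re (qform K x) - 2 * s * (cmod b)^2 + s^2 * (cmod b)^2 * Re (qform K y)" for s :: real
  proof -
    \<comment> \<open>\<open>t\<close> is chosen so that both cross terms become \<open>-s |b|\<^sup>2\<close>\<close>
    define t where "t = - (complex_of_real s * cnj b)"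
    have tb: "t * b = - complex_of_real (s * (cmod b)^2)"
      unfolding t_def by (simp add: algebra_simps mult_cnj_eq_cmod_square)
    have tt: "cnj t * t = complex_of_real (s^2 * (cmod b)^2)"
      unfolding t_def by (simp add: algebra_simps mult_cnj_eq_cmod_square power2_eq_square)
    have "cnj t * cnj b = cnj (t * b)" by simp
    then have ctb: "cnj t * cnj b = - complex_of_real (s * (cmod b)^2)" using tb by simp
    have "Re (qform K (x + t *s y))
        = Re (qform K x) - 2 * s * (cmod b)^2 + s^2 * (cmod b)^2 * Re (qform K y)"
      using qform_add_scale[of K x t y] assms unfolding b_def[symmetric] psd_def
      by (simp add: tb ctb tt)
    moreover have "0 \<le> Re (qform K (x + t *s y))" using assms unfolding psd_def by blast
    ultimately show ?thesis by simp
  qed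
  moreover have "0 \<le> Re (qform K y)" using assms unfolding psd_def by blast
  ultimately show ?thesis unfolding b_def by (rule real_quadratic_nonneg_bound)
qed

lemma psd_diag:
  assumes "psd K"
  shows "K $ i $ i = complex_of_real (Re (K $ i $ i))" "0 \<le> Re (K $ i $ i)"
proof -
  have "Im (qform K (axis i 1)) = 0" "0 \<le> Re (qform K (axis i 1))"
    using assms unfolding psd_def by blast+
  then show "K $ i $ i = complex_of_real (Re (K $ i $ i))" "0 \<le> Re (K $ i $ i)"
    unfolding qform_axis by (simp_all add: complex_eq_iff)
qed

lemma psd_diag_zero_imp_row_zero:
  assumes "psd K" and "K $ i $ i = 0"
  shows "K $ i $ j = 0"
  using psd_cauchy_schwarz[OF assms(1), of "axis i 1" "axis j 1"] assms(2)
  by (simp add: cinner_axis_left matrix_vector_mult_axis qform_axis)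

lemma psd_diff_outer_column:
  assumes psd: "psd K" and pos: "0 < Re (K $ i $ i)"
  defines "v \<equiv> complex_of_real (1 / sqrt (Re (K $ i $ i))) *s (K *v axis i 1)"
  shows "psd (K - outer v v)" "{j. (K - outer v v) $ j $ j \<noteq> 0} \<subseteq> {j. K $ j $ j \<noteq> 0} - {i}"
proof -
  define d where "d = Re (K $ i $ i)"
  have Kii: "K $ i $ i = complex_of_real d" using psd_diag(1)[OF psd] d_def by simp
  have d0: "0 < d" using pos d_def by simp
  have h: "hermitian K" using psd unfolding psd_def by blast
  have vj: "cmod (v $ j) = cmod (K $ j $ i) / sqrt d" for j
    unfolding v_def d_def[symmetric] vector_smult_component matrix_vector_mult_axis norm_mult
    using d0 by (simp add: norm_divide)
  have diag: "(K - outer v v) $ j $ j = K $ j $ j - complex_of_real ((cmod (K $ j $ i))^2 / d)" for j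
  proof -
    have "(cmod (v $ j))^2 = (cmod (K $ j $ i))^2 / d" using vj[of j] d0 by (simp add: power_divide)
    then show ?thesis
      unfolding outer_def by (simp add: mult_cnj_eq_cmod_square flip: of_real_power of_real_divide)
  qed
  show "psd (K - outer v v)"
    unfolding psd_def
  proof (intro conjI allI)
    show "hermitian (K - outer v v)" by (rule hermitian_diff[OF h hermitian_outer_self])
    fix x
    have "cinner v x = complex_of_real (1 / sqrt d) * cinner (axis i 1) (K *v x)"
      unfolding v_def d_def by (simp add: cinner_scale_left cinner_hermitian[OF h, symmetric])
    then have "(cmod (cinner v x))^2 = (cmod (cinner (axis i 1) (K *v x)))^2 / d"
      using d0 by (simp add: norm_mult norm_divide power_divide)
    also have "\<dots> \<le> Re (qform K (axis i 1)) * Re (qform K x) / d"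
      using psd_cauchy_schwarz[OF psd, of "axis i 1" x] d0 by (simp add: divide_right_mono)
    also have "\<dots> = Re (qform K x)" using d0 by (simp add: qform_axis Kii)
    finally have "(cmod (cinner v x))^2 \<le> Re (qform K x)" .
    moreover have "Im (qform K x) = 0" using psd unfolding psd_def by blast
    ultimately show "Im (qform (K - outer v v) x) = 0" "0 \<le> Re (qform (K - outer v v) x)"
      by (simp_all add: qform_diff qform_outer_self)
  qed
  show "{j. (K - outer v v) $ j $ j \<noteq> 0} \<subseteq> {j. K $ j $ j \<noteq> 0} - {i}"
  proof (intro subsetI, simp only: mem_Collect_eq)
    fix j assume j: "(K - outer v v) $ j $ j \<noteq> 0"
    have "(K - outer v v) $ i $ i = 0"
      using d0 unfolding diag Kii by (simp add: power2_eq_square)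
    moreover have "K $ j $ j \<noteq> 0"
    proof
      assume "K $ j $ j = 0"
      moreover have "K $ j $ i = 0" by (rule psd_diag_zero_imp_row_zero[OF psd \<open>K $ j $ j = 0\<close>])
      ultimately show False using j unfolding diag by simp
    qed
    ultimately show "j \<in> {j. K $ j $ j \<noteq> 0} - {i}" using j by auto
  qed
qed

lemma psd_eq_sum_outer:
  assumes "psd K"
  shows "\<exists>vs. K = (\<Sum>v\<leftarrow>vs. outer v v)"
  using assms
proof (induction "card {i. K $ i $ i \<noteq> 0}" arbitrary: K rule: less_induct)
  case less
  show ?case
  proof (cases "\<forall>i. K $ i $ i = 0")
    case True
    then have "K = 0"
      using psd_diag_zero_imp_row_zero[OF less.prems] by (simp add: vec_eq_iff)
    then show ?thesis by (intro exI[of _ "[]"]) simp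
  next
    case False
    then obtain i where i: "K $ i $ i \<noteq> 0" by blast
    then have "Re (K $ i $ i) \<noteq> 0" using psd_diag(1)[OF less.prems, of i] by auto
    then have "0 < Re (K $ i $ i)" using psd_diag(2)[OF less.prems, of i] by simp
    from psd_diff_outer_column[OF less.prems this] obtain v
      where psd': "psd (K - outer v v)"
        and sub: "{j. (K - outer v v) $ j $ j \<noteq> 0} \<subseteq> {j. K $ j $ j \<noteq> 0} - {i}"
      by blast
    have "card {j. (K - outer v v) $ j $ j \<noteq> 0} < card {i. K $ i $ i \<noteq> 0}"
    proof -
      have "card {j. (K - outer v v) $ j $ j \<noteq> 0} \<le> card ({j. K $ j $ j \<noteq> 0} - {i})"
        by (rule card_mono[OF _ sub]) simp
      also have "\<dots> < card {i. K $ i $ i \<noteq> 0}"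
        using i by (intro card_Diff1_less) auto
      finally show ?thesis .
    qed
    then obtain vs where "K - outer v v = (\<Sum>v\<leftarrow>vs. outer v v)"
      using less.hyps[OF _ psd'] by blast
    then have "K = (\<Sum>v\<leftarrow>v # vs. outer v v)" by (simp add: algebra_simps)
    then show ?thesis by blast
  qed
qed

subsection \<open>Inverses\<close>

lemma pd_invertible:
  fixes X :: "complex^'n^'n"
  assumes "pd X"
  shows "invertible X"
proof -
  have "inj ((*v) X)"
  proof (rule injI)
    fix x y assume "X *v x = X *v y"
    then have "qform X (x - y) = 0" by (simp add: qform_eq_cinner matrix_vector_mult_diff_distrib)
    then show "x = y"
      using assms unfolding pd_def by (metis less_irrefl right_minus_eq zero_complex.sel(1))
  qed
  then have "det X \<noteq> 0"
    using det_nz_iff_inj_gen[OF matrix_vector_mul_linear_gen, of X] by simp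
  then show ?thesis using invertible_det_nz by blast
qed

lemma pd_matrix_inv_inverse:
  assumes "pd X"
  shows "X ** matrix_inv X = mat 1" "matrix_inv X ** X = mat 1"
proof -
  have "\<exists>X'. X ** X' = mat 1 \<and> X' ** X = mat 1"
    using pd_invertible[OF assms] unfolding invertible_def .
  then have "X ** matrix_inv X = mat 1 \<and> matrix_inv X ** X = mat 1"
    unfolding matrix_inv_def by (rule someI_ex)
  then show "X ** matrix_inv X = mat 1" "matrix_inv X ** X = mat 1" by auto
qed

lemma pd_matrix_inv_apply: "pd X \<Longrightarrow> X *v (matrix_inv X *v u) = u"
  by (simp add: matrix_vector_mul_assoc pd_matrix_inv_inverse)

lemma pd_matrix_inv:
  assumes "pd X"
  shows "pd (matrix_inv X)"
  unfolding pd_def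
proof (intro conjI allI impI)
  have "X ** conj_transpose (matrix_inv X) = mat 1"
    using arg_cong[OF pd_matrix_inv_inverse(2)[OF assms], of conj_transpose] assms
    by (simp add: conj_transpose_matrix_mult hermitian_iff_conj_transpose pd_def)
  then have "conj_transpose (matrix_inv X) = matrix_inv X"
    by (metis pd_matrix_inv_inverse(2)[OF assms] matrix_mul_assoc matrix_mul_lid matrix_mul_rid)
  then show h: "hermitian (matrix_inv X)" by (simp add: hermitian_iff_conj_transpose)
  fix u :: "complex^'a" assume "u \<noteq> 0"
  show "Im (qform (matrix_inv X) u) = 0" by (rule Im_qform_hermitian[OF h])
  define y where "y = matrix_inv X *v u"
  have u: "u = X *v y" unfolding y_def using pd_matrix_inv_apply[OF assms] by simp
  then have "y \<noteq> 0" using \<open>u \<noteq> 0\<close> by auto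
  then have "0 < Re (qform X y)" using assms unfolding pd_def by blast
  moreover have "qform (matrix_inv X) u = cnj (qform X y)"
    unfolding qform_eq_cinner y_def[symmetric] by (simp add: u cinner_commute[of y])
  ultimately show "0 < Re (qform (matrix_inv X) u)" by simp
qed

text \<open>Convexity of \<open>X \<mapsto> u\<^sup>* X\<^sup>-\<^sup>1 u\<close>, in the form of its tangent inequality at \<open>X\<^sub>0\<close>; it follows from
  \<open>(y - w)\<^sup>* X (y - w) \<ge> 0\<close> with \<open>y = X\<^sup>-\<^sup>1 u\<close> and \<open>w = X\<^sub>0\<^sup>-\<^sup>1 u\<close>.\<close>

lemma Re_cinner_matrix_inv_tangent:
  assumes "pd X" and "pd X0"
  shows "Re (cinner u (matrix_inv X0 *v u)) - Re (qform (X - X0) (matrix_inv X0 *v u))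
           \<le> Re (cinner u (matrix_inv X *v u))"
proof -
  have h: "hermitian X" using assms(1) unfolding pd_def by blast
  define w where "w = matrix_inv X0 *v u"
  define y where "y = matrix_inv X *v u"
  have Xy: "X *v y = u" unfolding y_def by (rule pd_matrix_inv_apply[OF assms(1)])
  have X0w: "X0 *v w = u" unfolding w_def by (rule pd_matrix_inv_apply[OF assms(2)])
  have "cinner y (X *v w) = cinner u w"
    using cinner_hermitian[OF h, of y w] Xy by simp
  then have "qform X (y - w) = cinner y u - cinner u w - cinner w u + cinner w (X *v w)"
    unfolding qform_eq_cinner
    by (simp add: matrix_vector_mult_diff_distrib Xy cinner_diff_left cinner_diff_right)
  moreover have "0 \<le> Re (qform X (y - w))" using pd_imp_psd[OF assms(1)] unfolding psd_def by blast
  moreover have "qform (X - X0) w = cinner w (X *v w) - cinner w u"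
    unfolding qform_diff by (simp add: qform_eq_cinner X0w)
  moreover have "Re (cinner y u) = Re (cinner u y)" "Re (cinner w u) = Re (cinner u w)"
    by (simp_all add: cinner_commute[of y] cinner_commute[of w])
  ultimately show ?thesis unfolding w_def[symmetric] y_def[symmetric] by simp
qed

lemma psd_diff_matrix_inv:
  assumes "pd A" and "pd B" and "psd (A - B)"
  shows "psd (matrix_inv B - matrix_inv A)"
  unfolding psd_def
proof (intro conjI allI)
  show h: "hermitian (matrix_inv B - matrix_inv A)"
    using pd_matrix_inv[OF assms(1)] pd_matrix_inv[OF assms(2)] unfolding pd_def
    by (blast intro: hermitian_diff)
  fix u
  show "Im (qform (matrix_inv B - matrix_inv A) u) = 0" by (rule Im_qform_hermitian[OF h])
  have "0 \<le> Re (qform (A - B) (matrix_inv A *v u))" using assms(3) unfolding psd_def by blast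
  then show "0 \<le> Re (qform (matrix_inv B - matrix_inv A) u)"
    using Re_cinner_matrix_inv_tangent[OF assms(2,1), of u]
    by (simp add: qform_eq_cinner matrix_vector_mult_diff_rdistrib cinner_diff_right)
qed

subsection \<open>Determinants\<close>

lemma det_mat_1_replace_row:
  fixes v :: "'a::field^'n"
  shows "det (\<chi> i. if i = k then v else (mat 1 :: 'a^'n^'n) $ i) = v $ k"
proof -
  have rows: "row i (mat 1 :: 'a^'n^'n) = (mat 1 :: 'a^'n^'n) $ i" for i
    by (simp add: row_def vec_eq_iff)
  have "(\<Sum>i\<in>UNIV. v $ i *s (mat 1 :: 'a^'n^'n) $ i) = v"
    by (simp add: vec_eq_iff mat_def sum_component if_distrib if_distribR cong: if_cong)
  moreover have "det (\<chi> i. if i = k then \<Sum>i\<in>UNIV. v $ i *s (mat 1 :: 'a^'n^'n) $ i else mat 1 $ i) = v $ k"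
    using cramer_lemma_transpose[of k v "mat 1 :: 'a^'n^'n"] unfolding rows by simp
  ultimately show ?thesis by metis
qed

lemma det_add_rows_scaled:
  fixes A :: "'a::comm_ring_1^'n^'n"
  assumes "finite S"
  shows "det (\<chi> i. if i \<in> S then A $ i + w i *s v else A $ i)
       = det A + (\<Sum>k\<in>S. w k * det (\<chi> i. if i = k then v else A $ i))"
  using assms
proof (induction S arbitrary: A rule: finite_induct)
  case empty
  show ?case by simp
next
  case (insert j S)
  define B where "B = (\<chi> i. if i \<in> S then A $ i + w i *s v else A $ i)"
  define A' where "A' = (\<chi> i. if i = j then v else A $ i)"
  have "(\<chi> i. if i = j then v else B $ i) = (\<chi> i. if i \<in> S then A' $ i + w i *s v else A' $ i)"
    unfolding B_def A'_def using insert(2) by (auto simp: vec_eq_iff)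
  moreover have "det (\<chi> i. if i = k then v else A' $ i) = 0" if "k \<in> S" for k
  proof (rule det_identical_rows)
    show "k \<noteq> j" using that insert(2) by auto
    then show "row k (\<chi> i. if i = k then v else A' $ i) = row j (\<chi> i. if i = k then v else A' $ i)"
      by (simp add: row_def A'_def vec_eq_iff)
  qed
  ultimately have "det (\<chi> i. if i = j then v else B $ i) = det A'"
    using insert.IH[of A'] by simp
  moreover have "(\<chi> i. if i \<in> insert j S then A $ i + w i *s v else A $ i)
        = (\<chi> i. if i = j then B $ i + w j *s v else B $ i)"
    unfolding B_def using insert(2) by (auto simp: vec_eq_iff)
  moreover have "(\<chi> i. if i = j then B $ i else B $ i) = B" by (simp add: vec_eq_iff)
  ultimately have "det (\<chi> i. if i \<in> insert j S then A $ i + w i *s v else A $ i) = det B + w j * det A'"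
    using det_row_add[of j "\<lambda>i. B $ i" "\<lambda>_. w j *s v" "\<lambda>i. B $ i"] det_row_mul[of j "w j" "\<lambda>_. v"] by simp
  moreover have "det B = det A + (\<Sum>k\<in>S. w k * det (\<chi> i. if i = k then v else A $ i))"
    unfolding B_def by (rule insert.IH)
  ultimately show ?case using insert(1,2) by (simp add: A'_def algebra_simps)
qed

lemma det_mat_1_add_outer: "det (mat 1 + outer u v) = 1 + cinner v (u::complex^'n)"
proof -
  define cv where "cv = (\<chi> j. cnj (v $ j))"
  have "mat 1 + outer u v
      = (\<chi> i. if i \<in> UNIV then (mat 1 :: complex^'n^'n) $ i + (u $ i) *s cv else (mat 1 :: complex^'n^'n) $ i)"
    unfolding outer_def cv_def by (simp add: vec_eq_iff)
  then have "det (mat 1 + outer u v)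
      = 1 + (\<Sum>k\<in>UNIV. u $ k * det (\<chi> i. if i = k then cv else (mat 1 :: complex^'n^'n) $ i))"
    using det_add_rows_scaled[of UNIV "mat 1 :: complex^'n^'n" "\<lambda>i. u $ i" cv] by simp
  then show ?thesis
    unfolding det_mat_1_replace_row cinner_def cv_def by (simp add: mult.commute)
qed

lemma det_add_outer:
  fixes Z :: "complex^'n^'n"
  assumes "Z ** Z' = mat 1"
  shows "det (Z + outer u v) = det Z * (1 + cinner v (Z' *v u))"
proof -
  have "Z + outer u v = Z ** (mat 1 + outer (Z' *v u) v)"
    by (simp add: matrix_add_ldistrib matrix_mult_outer matrix_vector_mul_assoc assms)
  then show ?thesis by (simp add: det_mul det_mat_1_add_outer)
qed

lemma continuous_on_det:
  "continuous_on S f \<Longrightarrow> continuous_on S (\<lambda>t. det (f t :: 'a::real_normed_field^'n^'n))"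
  unfolding det_def by (intro continuous_intros)

lemma pd_convex_comb_mat_1:
  assumes "pd X" and "0 \<le> t" "t \<le> 1"
  shows "pd (t *\<^sub>R X + (1 - t) *\<^sub>R mat 1)"
  unfolding pd_def
proof (intro conjI allI impI)
  show "hermitian (t *\<^sub>R X + (1 - t) *\<^sub>R mat 1)"
    using assms(1) unfolding pd_def by (intro hermitian_add hermitian_scaleR hermitian_mat_1) blast
  fix x :: "complex^'a" assume "x \<noteq> 0"
  then have qx: "Im (qform X x) = 0" "0 < Re (qform X x)" using assms(1) unfolding pd_def by blast+
  have cx: "Im (cinner x x) = 0" "0 < Re (cinner x x)"
    using Re_cinner_self_pos[OF \<open>x \<noteq> 0\<close>] by (auto simp: cinner_self)
  have "0 < t * Re (qform X x) + (1 - t) * Re (cinner x x)"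
    using assms(2,3) qx cx
    by (cases "t = 0") (auto intro: add_pos_nonneg)
  then show "Im (qform (t *\<^sub>R X + (1 - t) *\<^sub>R mat 1) x) = 0"
    "0 < Re (qform (t *\<^sub>R X + (1 - t) *\<^sub>R mat 1) x)"
    using qx cx by (simp_all add: qform_add qform_scaleR qform_mat_1)
qed

text \<open>The determinant is real and nonzero along the segment from \<open>I\<close> to \<open>X\<close>, and equals \<open>1\<close> at \<open>I\<close>.\<close>

lemma pd_det_pos:
  fixes X :: "complex^'n^'n"
  assumes "pd X"
  shows "Im (det X) = 0" "0 < Re (det X)"
proof -
  show "Im (det X) = 0" using assms unfolding pd_def by (blast intro: hermitian_det_real)
  define g where "g t = Re (det (t *\<^sub>R X + (1 - t) *\<^sub>R (mat 1 :: complex^'n^'n)))" for t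
  have cont: "continuous_on {0..1} g"
    unfolding g_def by (intro continuous_intros continuous_on_det)
  have nz: "g t \<noteq> 0" if "0 \<le> t" "t \<le> 1" for t
  proof -
    have pt: "pd (t *\<^sub>R X + (1 - t) *\<^sub>R mat 1)" by (rule pd_convex_comb_mat_1[OF assms that])
    then have "det (t *\<^sub>R X + (1 - t) *\<^sub>R mat 1) \<noteq> 0"
      using pd_invertible invertible_det_nz by blast
    moreover have "Im (det (t *\<^sub>R X + (1 - t) *\<^sub>R mat 1)) = 0"
      using pt unfolding pd_def by (blast intro: hermitian_det_real)
    ultimately show ?thesis unfolding g_def by (simp add: complex_eq_iff)
  qed
  show "0 < Re (det X)"
  proof (rule ccontr)
    assume "\<not> 0 < Re (det X)"
    then have "g 1 \<le> 0" unfolding g_def by simp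
    moreover have "0 \<le> g 0" unfolding g_def by simp
    ultimately obtain t where "0 \<le> t" "t \<le> 1" "g t = 0"
      using IVT2'[of g 1 0 0, OF _ _ _ cont] by auto
    then show False using nz by blast
  qed
qed

subsection \<open>Log-determinants\<close>

definition logdet :: "complex^'n^'n \<Rightarrow> real" where
  "logdet X = ln (Re (det X))"

lemma logdet_mult:
  assumes "pd X" and "pd Z"
  shows "ln (Re (det (X ** Z))) = logdet X + logdet Z"
  using pd_det_pos[OF assms(1)] pd_det_pos[OF assms(2)]
  by (simp add: logdet_def det_mul ln_mult)

lemma logdet_matrix_inv: "pd A \<Longrightarrow> logdet (matrix_inv A) = - logdet A"
  using logdet_mult[OF pd_matrix_inv] pd_matrix_inv_inverse(2) by fastforce

lemma pd_matrix_inv_matrix_inv: "pd A \<Longrightarrow> matrix_inv (matrix_inv A) = A"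
  by (metis pd_matrix_inv_inverse pd_matrix_inv matrix_mul_assoc matrix_mul_lid matrix_mul_rid)

lemma log2det_plus_I_eq_logdet:
  assumes "pd A" and "psd Y"
  shows "log2det_plus_I (Y ** A) = (logdet (Y + matrix_inv A) + logdet A) / ln 2"
proof -
  have "Y ** A + mat 1 = (Y + matrix_inv A) ** A"
    by (simp add: matrix_add_rdistrib pd_matrix_inv_inverse(2)[OF assms(1)])
  then show ?thesis
    using logdet_mult[OF psd_add_pd[OF assms(2) pd_matrix_inv[OF assms(1)]] assms(1)]
    by (simp add: log2det_plus_I_def log_def)
qed

lemma logdet_add_outer:
  fixes Z :: "complex^'n^'n" and u v :: "complex^'n"
  assumes "pd Z" and "pd (Z + outer u v)"
  defines "q \<equiv> cinner v (matrix_inv Z *v u)"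
  shows "Im q = 0" "0 < 1 + Re q" "logdet (Z + outer u v) = logdet Z + ln (1 + Re q)"
proof -
  define a where "a = det Z"
  define b where "b = det (Z + outer u v)"
  have a: "a = complex_of_real (Re a)" "0 < Re a"
    unfolding a_def using pd_det_pos[OF assms(1)] by (auto simp: complex_eq_iff)
  have b: "b = complex_of_real (Re b)" "0 < Re b"
    unfolding b_def using pd_det_pos[OF assms(2)] by (auto simp: complex_eq_iff)
  have "b = a * (1 + q)" unfolding a_def b_def q_def by (rule det_add_outer[OF pd_matrix_inv_inverse(1)[OF assms(1)]])
  then have "1 + q = complex_of_real (Re b / Re a)"
    using a b by (metis nonzero_eq_divide_eq of_real_divide mult.commute less_irrefl of_real_eq_0_iff)
  then have q: "Im q = 0" "1 + Re q = Re b / Re a"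
    by (metis Im_complex_of_real Re_complex_of_real add_0 one_complex.sel plus_complex.sel)+
  then show "Im q = 0" "0 < 1 + Re q" using a b by simp_all
  show "logdet (Z + outer u v) = logdet Z + ln (1 + Re q)"
    unfolding logdet_def a_def[symmetric] b_def[symmetric] q(2) using a b by (simp add: ln_div)
qed

text \<open>The matrix determinant lemma applied to \<open>Z = (Z + u u\<^sup>*) - u u\<^sup>*\<close>.\<close>

lemma logdet_add_outer_self:
  fixes Z :: "complex^'n^'n" and u :: "complex^'n"
  assumes "pd Z"
  defines "x \<equiv> Re (cinner u (matrix_inv (Z + outer u u) *v u))"
  shows "x < 1" "logdet (Z + outer u u) - logdet Z = - ln (1 - x)"
proof -
  have pZ': "pd (Z + outer u u)" by (rule pd_add_psd[OF assms(1) psd_outer_self])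
  have eq: "Z + outer u u + outer (- u) u = Z" by (simp add: outer_minus_left)
  have q: "cinner u (matrix_inv (Z + outer u u) *v - u) = - cinner u (matrix_inv (Z + outer u u) *v u)"
    by (simp add: matrix_vector_mult_minus cinner_minus_right)
  note r = logdet_add_outer[OF pZ', of "- u" u, unfolded eq q, OF assms(1)]
  show "x < 1" using r(2) unfolding x_def by simp
  show "logdet (Z + outer u u) - logdet Z = - ln (1 - x)" using r(3) unfolding x_def by simp
qed

subsection \<open>Subgradients on the positive semidefinite cone\<close>

text \<open>Subgradients are real-linear functionals on Hermitian matrices, represented as
  \<open>H \<mapsto> \<Sum> c\<^sub>k Re (w\<^sub>k\<^sup>* H w\<^sub>k)\<close> (every such functional has this form); this is the form the
  rank-one arguments produce, and it is linear on all matrices, so it commutes with expectation.\<close>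

definition lin_qform :: "(real \<times> (complex^'n)) list \<Rightarrow> complex^'n^'n \<Rightarrow> real" where
  "lin_qform cws H = (\<Sum>(c, w)\<leftarrow>cws. c * Re (qform H w))"

definition has_qform_subgradient :: "(complex^'n^'n \<Rightarrow> real) \<Rightarrow> complex^'n^'n \<Rightarrow> bool" where
  "has_qform_subgradient f M \<longleftrightarrow> (\<exists>cws. \<forall>Y. psd Y \<longrightarrow> f M + lin_qform cws (Y - M) \<le> f Y)"

lemma lin_qform_append: "lin_qform (xs @ ys) H = lin_qform xs H + lin_qform ys H"
  unfolding lin_qform_def by simp

lemma lin_qform_scale: "lin_qform (map (\<lambda>(c, w). (k * c, w)) cws) H = k * lin_qform cws H"
  unfolding lin_qform_def by (induction cws) (auto simp: algebra_simps)

lemma has_qform_subgradient_const: "has_qform_subgradient (\<lambda>_. c) M"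
  unfolding has_qform_subgradient_def lin_qform_def by (intro exI[of _ "[]"]) simp

lemma has_qform_subgradient_add:
  assumes "has_qform_subgradient f M" and "has_qform_subgradient g M"
  shows "has_qform_subgradient (\<lambda>Y. f Y + g Y) M"
proof -
  obtain cws ds where "\<forall>Y. psd Y \<longrightarrow> f M + lin_qform cws (Y - M) \<le> f Y"
    and "\<forall>Y. psd Y \<longrightarrow> g M + lin_qform ds (Y - M) \<le> g Y"
    using assms unfolding has_qform_subgradient_def by blast
  then show ?thesis unfolding has_qform_subgradient_def
    by (intro exI[of _ "cws @ ds"]) (fastforce simp: lin_qform_append)
qed

lemma has_qform_subgradient_affine:
  assumes "has_qform_subgradient f M" and "0 \<le> k"
  shows "has_qform_subgradient (\<lambda>Y. k * f Y + c) M"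
proof -
  obtain cws where "\<forall>Y. psd Y \<longrightarrow> f M + lin_qform cws (Y - M) \<le> f Y"
    using assms(1) unfolding has_qform_subgradient_def by blast
  then have "\<forall>Y. psd Y \<longrightarrow> k * f M + c + lin_qform (map (\<lambda>(c, w). (k * c, w)) cws) (Y - M) \<le> k * f Y + c"
    using assms(2) by (auto simp: lin_qform_scale simp flip: distrib_left intro: mult_left_mono)
  then show ?thesis unfolding has_qform_subgradient_def by blast
qed

lemma has_qform_subgradient_cong:
  assumes "has_qform_subgradient f M" and "psd M" and "\<And>Y. psd Y \<Longrightarrow> f Y = g Y"
  shows "has_qform_subgradient g M"
  using assms unfolding has_qform_subgradient_def by metis

lemma ln_one_minus_diff_le:
  fixes x y :: real
  assumes "x < 1" and "y < 1"
  shows "ln (1 - y) - ln (1 - x) \<le> (x - y) / (1 - x)"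
proof -
  have "0 < (1 - y) / (1 - x)" using assms by simp
  then have "ln ((1 - y) / (1 - x)) \<le> (1 - y) / (1 - x) - 1" by (rule ln_le_minus_one)
  moreover have "ln ((1 - y) / (1 - x)) = ln (1 - y) - ln (1 - x)" using assms by (simp add: ln_div)
  moreover have "(1 - y) / (1 - x) - 1 = (x - y) / (1 - x)" using assms(1) by (simp add: field_simps)
  ultimately show ?thesis by simp
qed

lemma has_qform_subgradient_logdet_add_outer:
  assumes "pd E" and "psd M"
  shows "has_qform_subgradient (\<lambda>Y. logdet (Y + E + outer u u) - logdet (Y + E)) M"
proof -
  define x where "x Y = Re (cinner u (matrix_inv (Y + E + outer u u) *v u))" for Y
  have pd_YE: "pd (Y + E)" if "psd Y" for Y by (rule psd_add_pd[OF that assms(1)])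
  have pd_YEu: "pd (Y + E + outer u u)" if "psd Y" for Y
    by (rule pd_add_psd[OF pd_YE[OF that] psd_outer_self])
  note inc = logdet_add_outer_self[OF pd_YE, of _ u, folded x_def]
  define w where "w = matrix_inv (M + E + outer u u) *v u"
  have "logdet (M + E + outer u u) - logdet (M + E) + lin_qform [(- 1 / (1 - x M), w)] (Y - M)
      \<le> logdet (Y + E + outer u u) - logdet (Y + E)" if "psd Y" for Y
  proof -
    have "x M - Re (qform (Y - M) w) \<le> x Y"
      using Re_cinner_matrix_inv_tangent[OF pd_YEu[OF that] pd_YEu[OF assms(2)], of u]
      unfolding x_def w_def by simp
    then have "(x M - x Y) / (1 - x M) \<le> Re (qform (Y - M) w) / (1 - x M)"
      using inc(1)[OF assms(2)] by (simp add: divide_right_mono)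
    moreover have "ln (1 - x Y) - ln (1 - x M) \<le> (x M - x Y) / (1 - x M)"
      using inc(1)[OF assms(2)] inc(1)[OF that] by (rule ln_one_minus_diff_le)
    ultimately show ?thesis
      using inc(1,2)[OF that] inc(1,2)[OF assms(2)]
      by (simp add: lin_qform_def)
  qed
  then show ?thesis unfolding has_qform_subgradient_def by blast
qed

lemma has_qform_subgradient_logdet_add_sum_outer:
  assumes "pd E" and "psd M"
  shows "has_qform_subgradient (\<lambda>Y. logdet (Y + E + (\<Sum>v\<leftarrow>vs. outer v v)) - logdet (Y + E)) M"
  using assms(1)
proof (induction vs arbitrary: E)
  case Nil
  show ?case by (simp add: has_qform_subgradient_const)
next
  case (Cons v vs)
  have "has_qform_subgradient (\<lambda>Y. (logdet (Y + (E + outer v v) + (\<Sum>v\<leftarrow>vs. outer v v)) - logdet (Y + (E + outer v v)))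
      + (logdet (Y + E + outer v v) - logdet (Y + E))) M"
    using Cons.IH[OF pd_add_psd[OF Cons.prems psd_outer_self]]
      has_qform_subgradient_logdet_add_outer[OF Cons.prems assms(2)]
    by (rule has_qform_subgradient_add)
  then show ?case by (simp add: add.assoc)
qed

lemma has_qform_subgradient_log2det_plus_I_diff:
  fixes A B M :: "complex^'n^'n"
  assumes "pd A" and "pd B" and "psd (A - B)" and "psd M"
  shows "has_qform_subgradient (\<lambda>Y. log2det_plus_I (Y ** B) - log2det_plus_I (Y ** A)) M"
proof -
  obtain vs where vs: "matrix_inv B - matrix_inv A = (\<Sum>v\<leftarrow>vs. outer v v)"
    using psd_eq_sum_outer[OF psd_diff_matrix_inv[OF assms(1-3)]] by blast
  have sub: "has_qform_subgradient (\<lambda>Y. (1 / ln 2) *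
      (logdet (Y + matrix_inv A + (\<Sum>v\<leftarrow>vs. outer v v)) - logdet (Y + matrix_inv A))
      + (logdet B - logdet A) / ln 2) M"
    by (intro has_qform_subgradient_affine has_qform_subgradient_logdet_add_sum_outer
        pd_matrix_inv assms(1,4)) simp
  show ?thesis
  proof (rule has_qform_subgradient_cong[OF sub assms(4)])
    fix Y :: "complex^'n^'n" assume "psd Y"
    have "Y + matrix_inv A + (\<Sum>v\<leftarrow>vs. outer v v) = Y + matrix_inv B" by (simp flip: vs)
    then show "1 / ln 2 * (logdet (Y + matrix_inv A + (\<Sum>v\<leftarrow>vs. outer v v)) - logdet (Y + matrix_inv A))
        + (logdet B - logdet A) / ln 2 = log2det_plus_I (Y ** B) - log2det_plus_I (Y ** A)"
      using \<open>psd Y\<close> by (simp add: log2det_plus_I_eq_logdet assms(1,2) field_simps)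
  qed
qed

subsection \<open>Integrability\<close>

lemma trace_matrix_mult_sum_outer: "trace (A ** (\<Sum>v\<leftarrow>vs. outer v v)) = (\<Sum>v\<leftarrow>vs. cinner v (A *v v))"
proof (induction vs)
  case Nil
  show ?case by (simp add: trace_def)
next
  case (Cons v vs)
  then show ?case by (simp add: matrix_add_ldistrib trace_add trace_matrix_mult_outer)
qed

text \<open>Each rank-one increment \<open>ln (1 + v\<^sup>* Z\<^sup>-\<^sup>1 v)\<close> lies between \<open>0\<close> and \<open>v\<^sup>* E\<^sup>-\<^sup>1 v\<close>,
  since \<open>Z \<succeq> E\<close> gives \<open>Z\<^sup>-\<^sup>1 \<preceq> E\<^sup>-\<^sup>1\<close>.\<close>

lemma logdet_add_sum_outer_bounds:
  assumes "pd E" and "psd P"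
  shows "0 \<le> logdet (E + P + (\<Sum>v\<leftarrow>vs. outer v v)) - logdet (E + P)
       \<and> logdet (E + P + (\<Sum>v\<leftarrow>vs. outer v v)) - logdet (E + P)
           \<le> (\<Sum>v\<leftarrow>vs. Re (cinner v (matrix_inv E *v v)))"
  using assms(2)
proof (induction vs arbitrary: P)
  case Nil
  show ?case by simp
next
  case (Cons v vs)
  define Z where "Z = E + P"
  have pZ: "pd Z" unfolding Z_def by (rule pd_add_psd[OF assms(1) Cons.prems])
  define x where "x = Re (cinner v (matrix_inv Z *v v))"
  have inc: "logdet (Z + outer v v) = logdet Z + ln (1 + x)"
    unfolding x_def by (rule logdet_add_outer(3)[OF pZ pd_add_psd[OF pZ psd_outer_self]])
  have "0 \<le> x" using pd_matrix_inv[OF pZ] unfolding x_def pd_def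
    by (metis less_eq_real_def qform_eq_cinner qform_zero_right zero_complex.sel(1))
  moreover have "x \<le> Re (cinner v (matrix_inv E *v v))"
    using psd_diff_matrix_inv[OF pZ assms(1)] Cons.prems unfolding x_def psd_def Z_def
    by (simp add: qform_eq_cinner matrix_vector_mult_diff_rdistrib cinner_diff_right)
  moreover have "ln (1 + x) \<le> x" using \<open>0 \<le> x\<close> by (rule ln_add_one_self_le_self)
  moreover have "logdet (E + P + (\<Sum>v\<leftarrow>v # vs. outer v v)) - logdet (E + P)
      = (logdet (E + (P + outer v v) + (\<Sum>v\<leftarrow>vs. outer v v)) - logdet (E + (P + outer v v)))
        + ln (1 + x)"
    using inc unfolding Z_def by (simp add: algebra_simps)
  ultimately show ?case
    using Cons.IH[OF psd_add[OF Cons.prems psd_outer_self[of v]]] \<open>0 \<le> x\<close> by simp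
qed

lemma log2det_plus_I_bounds:
  fixes A Y :: "complex^'n^'n"
  assumes "pd A" and "psd Y"
  shows "0 \<le> log2det_plus_I (Y ** A)" "log2det_plus_I (Y ** A) \<le> Re (trace (A ** Y)) / ln 2"
proof -
  obtain vs where vs: "Y = (\<Sum>v\<leftarrow>vs. outer v v)" using psd_eq_sum_outer[OF assms(2)] by blast
  have "log2det_plus_I (Y ** A)
      = (logdet (matrix_inv A + 0 + (\<Sum>v\<leftarrow>vs. outer v v)) - logdet (matrix_inv A + 0)) / ln 2"
    using log2det_plus_I_eq_logdet[OF assms] logdet_matrix_inv[OF assms(1)] vs by (simp add: add.commute)
  moreover have "Re (trace (A ** Y)) = (\<Sum>v\<leftarrow>vs. Re (cinner v (matrix_inv (matrix_inv A) *v v)))"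
    unfolding vs trace_matrix_mult_sum_outer pd_matrix_inv_matrix_inv[OF assms(1)]
    by (induction vs) simp_all
  ultimately show "0 \<le> log2det_plus_I (Y ** A)" "log2det_plus_I (Y ** A) \<le> Re (trace (A ** Y)) / ln 2"
    using logdet_add_sum_outer_bounds[OF pd_matrix_inv[OF assms(1)] psd_zero, of vs]
    by (simp_all add: divide_right_mono)
qed

lemma bounded_linear_matrix_entry: "bounded_linear (\<lambda>X :: 'a::real_normed_vector^'m^'n. X $ i $ j)"
  by (rule bounded_linear_compose[OF bounded_linear_vec_nth bounded_linear_vec_nth])

lemma bounded_linear_qform: "bounded_linear (\<lambda>X. qform X w)"
  unfolding qform_def
  by (intro bounded_linear_sum bounded_linear_mult_const bounded_linear_const_mult
      bounded_linear_matrix_entry)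

lemma bounded_linear_trace_matrix_mult: "bounded_linear (\<lambda>X. trace (A ** X :: complex^'n^'n))"
  unfolding trace_def matrix_matrix_mult_def
  by (simp, intro bounded_linear_sum bounded_linear_const_mult bounded_linear_matrix_entry)

lemma bounded_linear_lin_qform: "bounded_linear (lin_qform cws)"
proof (induction cws)
  case Nil
  show ?case unfolding lin_qform_def by (simp add: bounded_linear_zero)
next
  case (Cons cw cws)
  then show ?case
    unfolding lin_qform_def
    by (cases cw) (auto intro!: bounded_linear_add bounded_linear_const_mult
        bounded_linear_compose[OF bounded_linear_Re bounded_linear_qform])
qed

lemma continuous_on_det_matrix_mult_add_mat_1:
  "continuous_on UNIV (\<lambda>X :: 'a::real_normed_field^'n^'n. det (X ** A + mat 1))"
  unfolding matrix_matrix_mult_def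
  by (intro continuous_on_det continuous_intros continuous_on_vec_lambda
      continuous_on_component[OF continuous_on_component[OF continuous_on_id]])

lemma integrable_log2det_plus_I:
  assumes "integrable M Y" and "\<forall>\<omega>\<in>space M. psd (Y \<omega>)" and "pd A"
  shows "integrable M (\<lambda>\<omega>. log2det_plus_I (Y \<omega> ** A))"
proof (rule Bochner_Integration.integrable_bound)
  show "integrable M (\<lambda>\<omega>. Re (trace (A ** Y \<omega>)) / ln 2)"
    using integrable_bounded_linear[OF bounded_linear_trace_matrix_mult assms(1)] by simp
  have "(\<lambda>\<omega>. det (Y \<omega> ** A + mat 1)) \<in> borel_measurable M"
    using borel_measurable_continuous_on[OF continuous_on_det_matrix_mult_add_mat_1
        borel_measurable_integrable[OF assms(1)]] .
  then show "(\<lambda>\<omega>. log2det_plus_I (Y \<omega> ** A)) \<in> borel_measurable M"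
    unfolding log2det_plus_I_def by measurable
  show "AE \<omega> in M. norm (log2det_plus_I (Y \<omega> ** A)) \<le> norm (Re (trace (A ** Y \<omega>)) / ln 2)"
  proof (rule AE_I2)
    fix \<omega> assume "\<omega> \<in> space M"
    then have "psd (Y \<omega>)" using assms(2) by blast
    note bounds = log2det_plus_I_bounds[OF assms(3) this]
    have "Re (trace (A ** Y \<omega>)) / ln 2 \<le> \<bar>Re (trace (A ** Y \<omega>))\<bar> / ln 2"
      by (simp add: divide_right_mono)
    then show "norm (log2det_plus_I (Y \<omega> ** A)) \<le> norm (Re (trace (A ** Y \<omega>)) / ln 2)"
      using bounds by simp
  qed
qed

lemma psd_integral:
  fixes Y :: "'w \<Rightarrow> complex^'n^'n"
  assumes "integrable M Y" and "\<forall>\<omega>\<in>space M. psd (Y \<omega>)"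
  shows "psd (\<integral>\<omega>. Y \<omega> \<partial>M)"
  unfolding psd_def
proof (intro conjI allI)
  have entry: "(\<integral>\<omega>. Y \<omega> \<partial>M) $ i $ j = (\<integral>\<omega>. Y \<omega> $ i $ j \<partial>M)" for i j
    using integral_bounded_linear[OF bounded_linear_matrix_entry assms(1)] by simp
  show "hermitian (\<integral>\<omega>. Y \<omega> \<partial>M)"
    unfolding hermitian_def
  proof (intro allI)
    fix i j
    have "(\<integral>\<omega>. Y \<omega> $ i $ j \<partial>M) = (\<integral>\<omega>. cnj (Y \<omega> $ j $ i) \<partial>M)"
      using assms(2) hermitianD unfolding psd_def by (intro Bochner_Integration.integral_cong) blast+
    then show "(\<integral>\<omega>. Y \<omega> \<partial>M) $ i $ j = cnj ((\<integral>\<omega>. Y \<omega> \<partial>M) $ j $ i)"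
      unfolding entry by simp
  qed
  fix x
  have qform: "qform (\<integral>\<omega>. Y \<omega> \<partial>M) x = (\<integral>\<omega>. qform (Y \<omega>) x \<partial>M)"
    using integral_bounded_linear[OF bounded_linear_qform assms(1)] by simp
  have integrable: "integrable M (\<lambda>\<omega>. qform (Y \<omega>) x)"
    using integrable_bounded_linear[OF bounded_linear_qform assms(1)] by simp
  have "(\<integral>\<omega>. Im (qform (Y \<omega>) x) \<partial>M) = (\<integral>\<omega>. 0 \<partial>M)"
    using assms(2) unfolding psd_def by (intro Bochner_Integration.integral_cong) blast+
  then show "Im (qform (\<integral>\<omega>. Y \<omega> \<partial>M) x) = 0"
    unfolding qform integral_bounded_linear[OF bounded_linear_Im integrable, symmetric] by simp
  have "0 \<le> (\<integral>\<omega>. Re (qform (Y \<omega>) x) \<partial>M)"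
    using assms(2) unfolding psd_def by (intro Bochner_Integration.integral_nonneg) blast
  then show "0 \<le> Re (qform (\<integral>\<omega>. Y \<omega> \<partial>M) x)"
    unfolding qform integral_bounded_linear[OF bounded_linear_Re integrable] .
qed

lemma has_qform_subgradient_jensen:
  fixes Y :: "'w \<Rightarrow> complex^'n^'n"
  assumes "prob_space M" and "integrable M Y" and "\<forall>\<omega>\<in>space M. psd (Y \<omega>)"
    and "integrable M (\<lambda>\<omega>. f (Y \<omega>))" and "has_qform_subgradient f (\<integral>\<omega>. Y \<omega> \<partial>M)"
  shows "f (\<integral>\<omega>. Y \<omega> \<partial>M) \<le> (\<integral>\<omega>. f (Y \<omega>) \<partial>M)"
proof -
  interpret prob_space M by fact
  define E where "E = (\<integral>\<omega>. Y \<omega> \<partial>M)"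
  obtain cws where cws: "\<forall>X. psd X \<longrightarrow> f E + lin_qform cws (X - E) \<le> f X"
    using assms(5) unfolding has_qform_subgradient_def E_def by blast
  have centered: "integrable M (\<lambda>\<omega>. Y \<omega> - E)" "(\<integral>\<omega>. Y \<omega> - E \<partial>M) = 0"
    using assms(2) prob_space by (simp_all add: Bochner_Integration.integral_diff E_def)
  have "(\<integral>\<omega>. f E + lin_qform cws (Y \<omega> - E) \<partial>M) \<le> (\<integral>\<omega>. f (Y \<omega>) \<partial>M)"
    using cws assms(3,4) integrable_bounded_linear[OF bounded_linear_lin_qform centered(1)]
    by (intro Bochner_Integration.integral_mono) auto
  moreover have "(\<integral>\<omega>. f E + lin_qform cws (Y \<omega> - E) \<partial>M) = f E"
    using integrable_bounded_linear[OF bounded_linear_lin_qform centered(1)] prob_space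
      integral_bounded_linear[OF bounded_linear_lin_qform centered(1)] centered(2)
      linear_0[OF bounded_linear.linear[OF bounded_linear_lin_qform]]
    by simp
  ultimately show ?thesis unfolding E_def by simp
qed

theorem lemma2:
  fixes M :: "'w measure" and Y :: "'w \<Rightarrow> complex^'n^'n"
    and A B :: "complex^'n^'n"
  assumes "prob_space M"
    and "integrable M Y"
    and "\<forall>\<omega>\<in>space M. psd (Y \<omega>)"
    and "pd A" and "pd B" and "psd (A - B)"
  shows "(\<integral>\<omega>. log2det_plus_I (Y \<omega> ** A) \<partial>M) - (\<integral>\<omega>. log2det_plus_I (Y \<omega> ** B) \<partial>M)
         \<le> log2det_plus_I ((\<integral>\<omega>. Y \<omega> \<partial>M) ** A) - log2det_plus_I ((\<integral>\<omega>. Y \<omega> \<partial>M) ** B)"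
proof -
  have int_A: "integrable M (\<lambda>\<omega>. log2det_plus_I (Y \<omega> ** A))"
    and int_B: "integrable M (\<lambda>\<omega>. log2det_plus_I (Y \<omega> ** B))"
    using integrable_log2det_plus_I assms(2-5) by blast+
  have "log2det_plus_I ((\<integral>\<omega>. Y \<omega> \<partial>M) ** B) - log2det_plus_I ((\<integral>\<omega>. Y \<omega> \<partial>M) ** A)
      \<le> (\<integral>\<omega>. log2det_plus_I (Y \<omega> ** B) - log2det_plus_I (Y \<omega> ** A) \<partial>M)"
    using int_A int_B psd_integral[OF assms(2,3)]
    by (intro has_qform_subgradient_jensen[OF assms(1-3)]
        has_qform_subgradient_log2det_plus_I_diff[OF assms(4-6)]) auto
  also have "\<dots> = (\<integral>\<omega>. log2det_plus_I (Y \<omega> ** B) \<partial>M) - (\<integral>\<omega>. log2det_plus_I (Y \<omega> ** A) \<partial>M)"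
    by (rule Bochner_Integration.integral_diff[OF int_B int_A])
  finally show ?thesis by simp
qed

end
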